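(* Let $(I,=_I,\neq_I;K)$ be a completely separated set and $\boldsymbol S^*=(\lambda_0,\lambda_1^*;\phi_0,\phi_1^* )$ a global family of completely separated sets over it, with $\phi_0(i)=F_i$. Equip $\Sigma:=\sum_{i\in I}\lambda_0(i)$ with the equality and inequality of global Sigma-sets below, and let $\widehat K:=\{\widehat k\mid k\in K\}$ with $\widehat k(i,x):=k(i)$, and $\widehat H:=\{\widehat\Phi\mid\Phi\in\prod_{i\in I}F_i\}$ with $\widehat\Phi(i,x):=\Phi_i(x)$. Then for all $(i,x),(j,y)\in\Sigma$, $$(i,x)\neq_{(\Sigma,\widehat K\cup\widehat H)}(j,y)\iff(i,x)\neq_\Sigma(j,y),$$ and $(\Sigma,=_\Sigma,\neq_\Sigma;\widehat K\cup\widehat H)$ is a completely separated set.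
   Context: Setting: constructive (Bishop-style) mathematics with intuitionistic logic. Sets carry an equality; functions respect equalities; $\mathbb F(X)$ = functions $X\to\mathbb R$ with pointwise equality; an extensional subset of $\mathbb F(X)$ is $\{f\mid P(f)\}$ with $P$ respecting $=_{\mathbb F(X)}$. $a\neq_{\mathbb R}b:\Leftrightarrow|a-b|>0$. An inequality satisfies $x=y\ \&\ x\neq y\Rightarrow\bot$. Strongly extensional: $f(x)\neq f(y)\Rightarrow x\neq y$. Induced relations for $F\subseteq\mathbb F(X)$: $x=_{(X,F)}x':\Leftrightarrow\forall_{f\in F}f(x)=f(x')$, $x\neq_{(X,F)}x':\Leftrightarrow\exists_{f\in F}f(x)\neq_{\mathbb R}f(x')$. A completely separated set $(X,=_X,\neq_X;F)$: $F$ extensional, $\neq_X\Leftrightarrow\neq_{(X,F)}$, $x=_{(X,F)}x'\Rightarrow x=_Xx'$. Global family of sets with an inequality over $(I,=_I,\neq_I)$: an assignment $i\mapsto(\lambda_0(i),=_{\lambda_0(i)},\neq_{\lambda_0(i)})$ and, for every pair $(i,j)\in I\times I$ (not only $i=_Ij$), a strongly extensional function $\lambda^*_{ij}:\lambda_0(i)\to\lambda_0(j)$, such that $\lambda^*_{ii}=\mathrm{id}$ and $\lambda^*_{jk}\circ\lambda^*_{ij}=\lambda^*_{ik}$ for all $i,j,k$ with $i=_Ij$. A global family of completely separated sets over $(I,=_I,\neq_I;K)$ additionally has extensional subsets $F_i\subseteq\mathbb F(\lambda_0(i))$ and functions $\phi^*_{ij}:F_i\to F_j$ for all $i,j\in I$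 such that (a) $x\neq_{\lambda_0(i)}x'\Leftrightarrow x\neq_{(\lambda_0(i),F_i)}x'$, (b) $x=_{(\lambda_0(i),F_i)}x'\Rightarrow x=_{\lambda_0(i)}x'$, (c) $\phi^*_{ij}(f)=f\circ\lambda^*_{ji}$ for all $f\in F_i$ and all $i,j\in I$. $\prod_{i\in I}F_i$: dependent assignments $\Phi$ with $\Phi_i\in F_i$ for all $i$ and $\Phi_j=\phi^*_{ij}(\Phi_i)$ whenever $i=_Ij$. Global Sigma-set $\Sigma$: pairs $(i,x)$, $x\in\lambda_0(i)$, with $(i,x)=_\Sigma(j,y):\Leftrightarrow i=_Ij\ \&\ \lambda^*_{ij}(x)=_{\lambda_0(j)}y$ and $(i,x)\neq_\Sigma(j,y):\Leftrightarrow i\neq_{(I,K)}j\ \vee\ \lambda^*_{ij}(x)\neq_{\lambda_0(j)}y$. *)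

theory Defs
  imports Main "HOL.Real"
begin

text \<open>Classical rendering of Bishop-style sets: a set is a carrier A together with
an equality relation eq and an inequality relation neq on A.\<close>

definition real_neq :: "real \<Rightarrow> real \<Rightarrow> bool" where
  "real_neq a b \<longleftrightarrow> \<bar>a - b\<bar> > 0"

definition set_with_ineq :: "'a set \<Rightarrow> ('a \<Rightarrow> 'a \<Rightarrow> bool) \<Rightarrow> ('a \<Rightarrow> 'a \<Rightarrow> bool) \<Rightarrow> bool" where
  "set_with_ineq A eq neq \<longleftrightarrow>
     (\<forall>x\<in>A. eq x x) \<and>
     (\<forall>x\<in>A. \<forall>y\<in>A. eq x y \<longrightarrow> eq y x) \<and>
     (\<forall>x\<in>A. \<forall>y\<in>A. \<forall>z\<in>A. eq x y \<and> eq y z \<longrightarrow> eq x z) \<and>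
     (\<forall>x\<in>A. \<forall>y\<in>A. eq x y \<and> neq x y \<longrightarrow> False)"

definition fun_space :: "'a set \<Rightarrow> ('a \<Rightarrow> 'a \<Rightarrow> bool) \<Rightarrow> ('a \<Rightarrow> real) set" where
  "fun_space A eq = {f. \<forall>x\<in>A. \<forall>y\<in>A. eq x y \<longrightarrow> f x = f y}"

definition feq :: "'a set \<Rightarrow> ('a \<Rightarrow> real) \<Rightarrow> ('a \<Rightarrow> real) \<Rightarrow> bool" where
  "feq A f g \<longleftrightarrow> (\<forall>x\<in>A. f x = g x)"

definition extensional_subset :: "'a set \<Rightarrow> ('a \<Rightarrow> 'a \<Rightarrow> bool) \<Rightarrow> ('a \<Rightarrow> real) set \<Rightarrow> bool" where
  "extensional_subset A eq F \<longleftrightarrow> F \<subseteq> fun_space A eq \<and>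
     (\<forall>f\<in>F. \<forall>g\<in>fun_space A eq. feq A f g \<longrightarrow> g \<in> F)"

definition ind_eq :: "('a \<Rightarrow> real) set \<Rightarrow> 'a \<Rightarrow> 'a \<Rightarrow> bool" where
  "ind_eq F x y \<longleftrightarrow> (\<forall>f\<in>F. f x = f y)"

definition ind_neq :: "('a \<Rightarrow> real) set \<Rightarrow> 'a \<Rightarrow> 'a \<Rightarrow> bool" where
  "ind_neq F x y \<longleftrightarrow> (\<exists>f\<in>F. real_neq (f x) (f y))"

definition completely_separated ::
  "'a set \<Rightarrow> ('a \<Rightarrow> 'a \<Rightarrow> bool) \<Rightarrow> ('a \<Rightarrow> 'a \<Rightarrow> bool) \<Rightarrow> ('a \<Rightarrow> real) set \<Rightarrow> bool" where
  "completely_separated A eq neq F \<longleftrightarrow>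
     set_with_ineq A eq neq \<and> extensional_subset A eq F \<and>
     (\<forall>x\<in>A. \<forall>y\<in>A. neq x y \<longleftrightarrow> ind_neq F x y) \<and>
     (\<forall>x\<in>A. \<forall>y\<in>A. ind_eq F x y \<longrightarrow> eq x y)"

definition is_fun :: "'a set \<Rightarrow> ('a \<Rightarrow> 'a \<Rightarrow> bool) \<Rightarrow> 'b set \<Rightarrow> ('b \<Rightarrow> 'b \<Rightarrow> bool) \<Rightarrow> ('a \<Rightarrow> 'b) \<Rightarrow> bool" where
  "is_fun A eqA B eqB f \<longleftrightarrow> (\<forall>x\<in>A. f x \<in> B) \<and> (\<forall>x\<in>A. \<forall>y\<in>A. eqA x y \<longrightarrow> eqB (f x) (f y))"

definition strongly_ext :: "'a set \<Rightarrow> ('a \<Rightarrow> 'a \<Rightarrow> bool) \<Rightarrow> ('b \<Rightarrow> 'b \<Rightarrow> bool) \<Rightarrow> ('a \<Rightarrow> 'b) \<Rightarrow> bool" where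
  "strongly_ext A neqA neqB f \<longleftrightarrow> (\<forall>x\<in>A. \<forall>y\<in>A. neqB (f x) (f y) \<longrightarrow> neqA x y)"

text \<open>Global family of sets with an inequality over I: lam0 i with eq i, neq i; lam i j = lambda*_ij.\<close>
definition global_family ::
  "'i set \<Rightarrow> ('i \<Rightarrow> 'i \<Rightarrow> bool) \<Rightarrow> ('i \<Rightarrow> 'x set) \<Rightarrow> ('i \<Rightarrow> 'x \<Rightarrow> 'x \<Rightarrow> bool) \<Rightarrow>
   ('i \<Rightarrow> 'x \<Rightarrow> 'x \<Rightarrow> bool) \<Rightarrow> ('i \<Rightarrow> 'i \<Rightarrow> 'x \<Rightarrow> 'x) \<Rightarrow> bool" where
  "global_family I eqI lam0 eq neq lam \<longleftrightarrow>
     (\<forall>i\<in>I. set_with_ineq (lam0 i) (eq i) (neq i)) \<and>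
     (\<forall>i\<in>I. \<forall>j\<in>I. is_fun (lam0 i) (eq i) (lam0 j) (eq j) (lam i j) \<and>
                    strongly_ext (lam0 i) (neq i) (neq j) (lam i j)) \<and>
     (\<forall>i\<in>I. \<forall>x\<in>lam0 i. eq i (lam i i x) x) \<and>
     (\<forall>i\<in>I. \<forall>j\<in>I. \<forall>k\<in>I. eqI i j \<longrightarrow>
        (\<forall>x\<in>lam0 i. eq k (lam j k (lam i j x)) (lam i k x)))"

definition global_family_cs ::
  "'i set \<Rightarrow> ('i \<Rightarrow> 'i \<Rightarrow> bool) \<Rightarrow> ('i \<Rightarrow> 'x set) \<Rightarrow> ('i \<Rightarrow> 'x \<Rightarrow> 'x \<Rightarrow> bool) \<Rightarrow>
   ('i \<Rightarrow> 'x \<Rightarrow> 'x \<Rightarrow> bool) \<Rightarrow> ('i \<Rightarrow> 'i \<Rightarrow> 'x \<Rightarrow> 'x) \<Rightarrow>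
   ('i \<Rightarrow> ('x \<Rightarrow> real) set) \<Rightarrow> ('i \<Rightarrow> 'i \<Rightarrow> ('x \<Rightarrow> real) \<Rightarrow> ('x \<Rightarrow> real)) \<Rightarrow> bool" where
  "global_family_cs I eqI lam0 eq neq lam F phi \<longleftrightarrow>
     global_family I eqI lam0 eq neq lam \<and>
     (\<forall>i\<in>I. extensional_subset (lam0 i) (eq i) (F i)) \<and>
     (\<forall>i\<in>I. \<forall>j\<in>I. \<forall>f\<in>F i. phi i j f \<in> F j) \<and>
     (\<forall>i\<in>I. \<forall>x\<in>lam0 i. \<forall>x'\<in>lam0 i. neq i x x' \<longleftrightarrow> ind_neq (F i) x x') \<and>
     (\<forall>i\<in>I. \<forall>x\<in>lam0 i. \<forall>x'\<in>lam0 i. ind_eq (F i) x x' \<longrightarrow> eq i x x') \<and>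
     (\<forall>i\<in>I. \<forall>j\<in>I. \<forall>f\<in>F i. feq (lam0 j) (phi i j f) (f \<circ> lam j i))"

definition prod_F ::
  "'i set \<Rightarrow> ('i \<Rightarrow> 'i \<Rightarrow> bool) \<Rightarrow> ('i \<Rightarrow> 'x set) \<Rightarrow> ('i \<Rightarrow> ('x \<Rightarrow> real) set) \<Rightarrow>
   ('i \<Rightarrow> 'i \<Rightarrow> ('x \<Rightarrow> real) \<Rightarrow> ('x \<Rightarrow> real)) \<Rightarrow> ('i \<Rightarrow> 'x \<Rightarrow> real) set" where
  "prod_F I eqI lam0 F phi = {\<Phi>. (\<forall>i\<in>I. \<Phi> i \<in> F i) \<and>
      (\<forall>i\<in>I. \<forall>j\<in>I. eqI i j \<longrightarrow> feq (lam0 j) (\<Phi> j) (phi i j (\<Phi> i)))}"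

text \<open>Global Sigma-set: carrier is HOL's Sigma I lam0.\<close>
definition sig_eq :: "('i \<Rightarrow> 'i \<Rightarrow> bool) \<Rightarrow> ('i \<Rightarrow> 'x \<Rightarrow> 'x \<Rightarrow> bool) \<Rightarrow> ('i \<Rightarrow> 'i \<Rightarrow> 'x \<Rightarrow> 'x) \<Rightarrow>
   'i \<times> 'x \<Rightarrow> 'i \<times> 'x \<Rightarrow> bool" where
  "sig_eq eqI eq lam p q \<longleftrightarrow> eqI (fst p) (fst q) \<and> eq (fst q) (lam (fst p) (fst q) (snd p)) (snd q)"

definition sig_neq :: "('i \<Rightarrow> real) set \<Rightarrow> ('i \<Rightarrow> 'x \<Rightarrow> 'x \<Rightarrow> bool) \<Rightarrow> ('i \<Rightarrow> 'i \<Rightarrow> 'x \<Rightarrow> 'x) \<Rightarrow>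
   'i \<times> 'x \<Rightarrow> 'i \<times> 'x \<Rightarrow> bool" where
  "sig_neq K neq lam p q \<longleftrightarrow> ind_neq K (fst p) (fst q) \<or> neq (fst q) (lam (fst p) (fst q) (snd p)) (snd q)"

definition hatK :: "('i \<Rightarrow> real) \<Rightarrow> 'i \<times> 'x \<Rightarrow> real" where
  "hatK k = (\<lambda>(i, x). k i)"

definition hatH :: "('i \<Rightarrow> 'x \<Rightarrow> real) \<Rightarrow> 'i \<times> 'x \<Rightarrow> real" where
  "hatH \<Phi> = (\<lambda>(i, x). \<Phi> i x)"

definition KH_set ::
  "'i set \<Rightarrow> ('i \<Rightarrow> 'i \<Rightarrow> bool) \<Rightarrow> ('i \<Rightarrow> real) set \<Rightarrow> ('i \<Rightarrow> 'x set) \<Rightarrow> ('i \<Rightarrow> 'x \<Rightarrow> 'x \<Rightarrow> bool) \<Rightarrow>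
   ('i \<Rightarrow> 'i \<Rightarrow> 'x \<Rightarrow> 'x) \<Rightarrow> ('i \<Rightarrow> ('x \<Rightarrow> real) set) \<Rightarrow>
   ('i \<Rightarrow> 'i \<Rightarrow> ('x \<Rightarrow> real) \<Rightarrow> ('x \<Rightarrow> real)) \<Rightarrow> ('i \<times> 'x \<Rightarrow> real) set" where
  "KH_set I eqI K lam0 eq lam F phi =
     {f \<in> fun_space (Sigma I lam0) (sig_eq eqI eq lam).
        (\<exists>k\<in>K. feq (Sigma I lam0) f (hatK k)) \<or>
        (\<exists>\<Phi>\<in>prod_F I eqI lam0 F phi. feq (Sigma I lam0) f (hatH \<Phi>))}"

end

theory Submission
  imports Defs
begin

text \<open>Points of the Sigma-set are told apart either by their indices, which the functions
  \<open>hatK k\<close> detect, or by their transported fibre coordinates. For the latter, every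
  \<open>g \<in> F j\<close> extends along the transport maps to the dependent assignment
  \<open>k \<mapsto> phi j k g\<close> in \<open>\<Prod>i. F i\<close>, whose hat takes the value \<open>g (lam i j x)\<close> at \<open>(i, x)\<close>
  and \<open>g y\<close> at \<open>(j, y)\<close>. Conversely, an assignment \<open>\<Phi>\<close> in the product is compatible
  with transport, \<open>\<Phi> j (lam i j x) = \<Phi> i x\<close> whenever \<open>i =\<^sub>I j\<close>, so its hat respects the
  Sigma-equality and can only separate points whose fibre coordinates are apart.\<close>

lemma real_neq_iff: "real_neq a b \<longleftrightarrow> a \<noteq> b"
  by (auto simp: real_neq_def)

locale global_family_over_cs_set =
  fixes I :: "'i set" and eqI neqI :: "'i \<Rightarrow> 'i \<Rightarrow> bool" and K :: "('i \<Rightarrow> real) set"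
    and lam0 :: "'i \<Rightarrow> 'x set" and eq neq :: "'i \<Rightarrow> 'x \<Rightarrow> 'x \<Rightarrow> bool"
    and lam :: "'i \<Rightarrow> 'i \<Rightarrow> 'x \<Rightarrow> 'x"
    and F :: "'i \<Rightarrow> ('x \<Rightarrow> real) set" and phi :: "'i \<Rightarrow> 'i \<Rightarrow> ('x \<Rightarrow> real) \<Rightarrow> ('x \<Rightarrow> real)"
  assumes index_cs: "completely_separated I eqI neqI K"
    and family_cs: "global_family_cs I eqI lam0 eq neq lam F phi"
begin

abbreviation KH :: "('i \<times> 'x \<Rightarrow> real) set" where
  "KH \<equiv> KH_set I eqI K lam0 eq lam F phi"

abbreviation sigma_eq :: "'i \<times> 'x \<Rightarrow> 'i \<times> 'x \<Rightarrow> bool" where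
  "sigma_eq \<equiv> sig_eq eqI eq lam"

abbreviation sigma_neq :: "'i \<times> 'x \<Rightarrow> 'i \<times> 'x \<Rightarrow> bool" where
  "sigma_neq \<equiv> sig_neq K neq lam"

lemma index_set_with_ineq: "set_with_ineq I eqI neqI"
  using index_cs by (simp add: completely_separated_def)

lemma eqI_refl: "i \<in> I \<Longrightarrow> eqI i i"
  and eqI_sym: "i \<in> I \<Longrightarrow> j \<in> I \<Longrightarrow> eqI i j \<Longrightarrow> eqI j i"
  and eqI_trans: "i \<in> I \<Longrightarrow> j \<in> I \<Longrightarrow> k \<in> I \<Longrightarrow> eqI i j \<Longrightarrow> eqI j k \<Longrightarrow> eqI i k"
  and eqI_not_neqI: "i \<in> I \<Longrightarrow> j \<in> I \<Longrightarrow> eqI i j \<Longrightarrow> neqI i j \<Longrightarrow> False"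
  using index_set_with_ineq unfolding set_with_ineq_def by blast+

lemma neqI_iff_ind_neq: "i \<in> I \<Longrightarrow> j \<in> I \<Longrightarrow> neqI i j \<longleftrightarrow> ind_neq K i j"
  using index_cs by (simp add: completely_separated_def)

lemma eqI_if_ind_eq: "i \<in> I \<Longrightarrow> j \<in> I \<Longrightarrow> ind_eq K i j \<Longrightarrow> eqI i j"
  using index_cs unfolding completely_separated_def by (elim conjE) blast

lemma K_respects_eqI: "f \<in> K \<Longrightarrow> i \<in> I \<Longrightarrow> j \<in> I \<Longrightarrow> eqI i j \<Longrightarrow> f i = f j"
  using index_cs unfolding completely_separated_def extensional_subset_def fun_space_def by blast

lemma global_family: "global_family I eqI lam0 eq neq lam"
  using family_cs by (simp add: global_family_cs_def)

lemma fibre_set_with_ineq: "i \<in> I \<Longrightarrow> set_with_ineq (lam0 i) (eq i) (neq i)"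
  using global_family by (simp add: global_family_def)

lemma fibre_eq_sym: "i \<in> I \<Longrightarrow> x \<in> lam0 i \<Longrightarrow> y \<in> lam0 i \<Longrightarrow> eq i x y \<Longrightarrow> eq i y x"
  and fibre_eq_trans: "i \<in> I \<Longrightarrow> x \<in> lam0 i \<Longrightarrow> y \<in> lam0 i \<Longrightarrow> z \<in> lam0 i \<Longrightarrow>
    eq i x y \<Longrightarrow> eq i y z \<Longrightarrow> eq i x z"
  and fibre_eq_not_neq: "i \<in> I \<Longrightarrow> x \<in> lam0 i \<Longrightarrow> y \<in> lam0 i \<Longrightarrow> eq i x y \<Longrightarrow> neq i x y \<Longrightarrow> False"
  using fibre_set_with_ineq unfolding set_with_ineq_def by blast+

lemma lam_in: "i \<in> I \<Longrightarrow> j \<in> I \<Longrightarrow> x \<in> lam0 i \<Longrightarrow> lam i j x \<in> lam0 j"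
  and lam_respects_eq: "i \<in> I \<Longrightarrow> j \<in> I \<Longrightarrow> x \<in> lam0 i \<Longrightarrow> y \<in> lam0 i \<Longrightarrow>
    eq i x y \<Longrightarrow> eq j (lam i j x) (lam i j y)"
  and lam_id: "i \<in> I \<Longrightarrow> x \<in> lam0 i \<Longrightarrow> eq i (lam i i x) x"
  and lam_comp: "i \<in> I \<Longrightarrow> j \<in> I \<Longrightarrow> k \<in> I \<Longrightarrow> eqI i j \<Longrightarrow> x \<in> lam0 i \<Longrightarrow>
    eq k (lam j k (lam i j x)) (lam i k x)"
  using global_family unfolding global_family_def is_fun_def by blast+

lemma F_respects_eq: "i \<in> I \<Longrightarrow> f \<in> F i \<Longrightarrow> x \<in> lam0 i \<Longrightarrow> y \<in> lam0 i \<Longrightarrow> eq i x y \<Longrightarrow> f x = f y"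
  using family_cs unfolding global_family_cs_def extensional_subset_def fun_space_def by blast

lemma phi_in: "i \<in> I \<Longrightarrow> j \<in> I \<Longrightarrow> f \<in> F i \<Longrightarrow> phi i j f \<in> F j"
  using family_cs by (simp add: global_family_cs_def)

lemma phi_apply: "i \<in> I \<Longrightarrow> j \<in> I \<Longrightarrow> f \<in> F i \<Longrightarrow> z \<in> lam0 j \<Longrightarrow> phi i j f z = f (lam j i z)"
  using family_cs by (simp add: global_family_cs_def feq_def)

lemma fibre_neq_iff_ind_neq: "i \<in> I \<Longrightarrow> x \<in> lam0 i \<Longrightarrow> y \<in> lam0 i \<Longrightarrow> neq i x y \<longleftrightarrow> ind_neq (F i) x y"
  using family_cs by (simp add: global_family_cs_def)

lemma fibre_eq_if_ind_eq: "i \<in> I \<Longrightarrow> x \<in> lam0 i \<Longrightarrow> y \<in> lam0 i \<Longrightarrow> ind_eq (F i) x y \<Longrightarrow> eq i x y"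
  using family_cs unfolding global_family_cs_def by (elim conjE) blast

lemma lam_inverse:
  assumes i: "i \<in> I" and j: "j \<in> I" and ij: "eqI i j" and x: "x \<in> lam0 i"
  shows "eq i (lam j i (lam i j x)) x"
  using fibre_eq_trans[OF i lam_in[OF j i lam_in[OF i j x]] lam_in[OF i i x] x
      lam_comp[OF i j i ij x] lam_id[OF i x]] .

lemma F_lam_inverse:
  assumes i: "i \<in> I" and j: "j \<in> I" and ij: "eqI i j" and x: "x \<in> lam0 i" and f: "f \<in> F i"
  shows "f (lam j i (lam i j x)) = f x"
  using F_respects_eq[OF i f lam_in[OF j i lam_in[OF i j x]] x lam_inverse[OF i j ij x]] .

lemma prod_F_in: "\<Phi> \<in> prod_F I eqI lam0 F phi \<Longrightarrow> i \<in> I \<Longrightarrow> \<Phi> i \<in> F i"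
  by (simp add: prod_F_def)

lemma prod_F_transport:
  assumes P: "\<Phi> \<in> prod_F I eqI lam0 F phi" and i: "i \<in> I" and j: "j \<in> I"
    and ij: "eqI i j" and x: "x \<in> lam0 i"
  shows "\<Phi> j (lam i j x) = \<Phi> i x"
proof -
  have "\<Phi> j (lam i j x) = phi i j (\<Phi> i) (lam i j x)"
    using P i j ij lam_in[OF i j x] by (simp add: prod_F_def feq_def)
  also have "\<dots> = \<Phi> i (lam j i (lam i j x))"
    using phi_apply[OF i j prod_F_in[OF P i] lam_in[OF i j x]] .
  also have "\<dots> = \<Phi> i x"
    using F_lam_inverse[OF i j ij x prod_F_in[OF P i]] .
  finally show ?thesis .
qed

lemma prod_F_of_component:
  assumes j: "j \<in> I" and g: "g \<in> F j"
  shows "(\<lambda>k. phi j k g) \<in> prod_F I eqI lam0 F phi"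
  unfolding prod_F_def feq_def
proof (intro CollectI conjI ballI impI)
  fix k assume "k \<in> I"
  then show "phi j k g \<in> F k" using phi_in j g by blast
next
  fix a b z assume a: "a \<in> I" and b: "b \<in> I" and ab: "eqI a b" and z: "z \<in> lam0 b"
  have "phi a b (phi j a g) z = g (lam a j (lam b a z))"
    using phi_apply[OF a b phi_in[OF j a g] z] phi_apply[OF j a g lam_in[OF b a z]] by simp
  also have "\<dots> = g (lam b j z)"
    using F_respects_eq[OF j g lam_in[OF a j lam_in[OF b a z]] lam_in[OF b j z]
        lam_comp[OF b a j eqI_sym[OF a b ab] z]] .
  also have "\<dots> = phi j b g z" using phi_apply[OF j b g z] by simp
  finally show "phi j b g z = phi a b (phi j a g) z" by simp
qed

lemma hatH_of_component_apply:
  assumes "j \<in> I" "g \<in> F j" "i \<in> I" "x \<in> lam0 i" "y \<in> lam0 j"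
  shows "hatH (\<lambda>k. phi j k g) (i, x) = g (lam i j x)"
    and "hatH (\<lambda>k. phi j k g) (j, y) = g y"
proof -
  show "hatH (\<lambda>k. phi j k g) (i, x) = g (lam i j x)"
    using phi_apply[OF assms(1,3,2,4)] by (simp add: hatH_def)
  have "hatH (\<lambda>k. phi j k g) (j, y) = g (lam j j y)"
    using phi_apply[OF assms(1,1,2,5)] by (simp add: hatH_def)
  also have "\<dots> = g y"
    using F_respects_eq[OF assms(1,2) lam_in[OF assms(1,1,5)] assms(5) lam_id[OF assms(1,5)]] .
  finally show "hatH (\<lambda>k. phi j k g) (j, y) = g y" .
qed

lemma hatH_in_fun_space:
  assumes P: "\<Phi> \<in> prod_F I eqI lam0 F phi"
  shows "hatH \<Phi> \<in> fun_space (Sigma I lam0) sigma_eq"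
  unfolding fun_space_def
proof (intro CollectI ballI impI)
  fix p q assume "p \<in> Sigma I lam0" "q \<in> Sigma I lam0" and pq: "sigma_eq p q"
  then obtain i x j y where pq_def: "p = (i, x)" "q = (j, y)"
    and i: "i \<in> I" and x: "x \<in> lam0 i" and j: "j \<in> I" and y: "y \<in> lam0 j" by blast
  have ij: "eqI i j" and e: "eq j (lam i j x) y" using pq pq_def by (auto simp: sig_eq_def)
  have "\<Phi> j y = \<Phi> j (lam i j x)"
    using F_respects_eq[OF j prod_F_in[OF P j] lam_in[OF i j x] y e] by simp
  also have "\<dots> = \<Phi> i x" using prod_F_transport[OF P i j ij x] .
  finally show "hatH \<Phi> p = hatH \<Phi> q" using pq_def by (simp add: hatH_def)
qed

lemma hatH_in_KH: "\<Phi> \<in> prod_F I eqI lam0 F phi \<Longrightarrow> hatH \<Phi> \<in> KH"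
  unfolding KH_set_def using hatH_in_fun_space by (auto simp: feq_def)

lemma hatK_in_KH:
  assumes k: "k \<in> K"
  shows "hatK k \<in> KH"
proof -
  have "hatK k \<in> fun_space (Sigma I lam0) sigma_eq"
    using K_respects_eqI[OF k] by (auto simp: fun_space_def hatK_def sig_eq_def)
  then show ?thesis unfolding KH_set_def using k by (auto simp: feq_def)
qed

lemma KH_cases:
  assumes "f \<in> KH"
  obtains k where "k \<in> K" "feq (Sigma I lam0) f (hatK k)"
  | \<Phi> where "\<Phi> \<in> prod_F I eqI lam0 F phi" "feq (Sigma I lam0) f (hatH \<Phi>)"
  using assms unfolding KH_set_def by blast

lemma sig_neq_if_ind_neq_KH:
  assumes i: "i \<in> I" and x: "x \<in> lam0 i" and j: "j \<in> I" and y: "y \<in> lam0 j"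
    and sep: "ind_neq KH (i, x) (j, y)"
  shows "sigma_neq (i, x) (j, y)"
proof (cases "ind_neq K i j")
  case True
  then show ?thesis by (simp add: sig_neq_def)
next
  case False
  then have ij: "eqI i j"
    using eqI_if_ind_eq[OF i j] by (auto simp: ind_neq_def ind_eq_def real_neq_iff)
  obtain f where f: "f \<in> KH" and fn: "f (i, x) \<noteq> f (j, y)"
    using sep by (auto simp: ind_neq_def real_neq_iff)
  from f show ?thesis
  proof (cases rule: KH_cases)
    case (1 k)
    then have "k i \<noteq> k j" using fn i x j y by (auto simp: feq_def hatK_def)
    then show ?thesis using K_respects_eqI[OF 1(1) i j ij] by blast
  next
    case (2 \<Phi>)
    then have "\<Phi> i x \<noteq> \<Phi> j y" using fn i x j y by (auto simp: feq_def hatH_def)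
    then have "\<Phi> j (lam i j x) \<noteq> \<Phi> j y" using prod_F_transport[OF 2(1) i j ij x] by simp
    then have "ind_neq (F j) (lam i j x) y"
      using prod_F_in[OF 2(1) j] by (auto simp: ind_neq_def real_neq_iff)
    then show ?thesis using fibre_neq_iff_ind_neq[OF j lam_in[OF i j x] y] by (simp add: sig_neq_def)
  qed
qed

lemma ind_neq_KH_if_sig_neq:
  assumes i: "i \<in> I" and x: "x \<in> lam0 i" and j: "j \<in> I" and y: "y \<in> lam0 j"
    and apart: "sigma_neq (i, x) (j, y)"
  shows "ind_neq KH (i, x) (j, y)"
  using apart unfolding sig_neq_def fst_conv snd_conv
proof
  assume "ind_neq K i j"
  then obtain k where k: "k \<in> K" "k i \<noteq> k j" by (auto simp: ind_neq_def real_neq_iff)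
  then show ?thesis
    unfolding ind_neq_def real_neq_iff using hatK_in_KH[OF k(1)]
    by (intro bexI[of _ "hatK k"]) (auto simp: hatK_def)
next
  assume "neq j (lam i j x) y"
  then obtain g where g: "g \<in> F j" "g (lam i j x) \<noteq> g y"
    using fibre_neq_iff_ind_neq[OF j lam_in[OF i j x] y] by (auto simp: ind_neq_def real_neq_iff)
  then show ?thesis
    using hatH_in_KH[OF prod_F_of_component[OF j g(1)]] hatH_of_component_apply[OF j g(1) i x y]
    unfolding ind_neq_def real_neq_iff by metis
qed

lemma sig_eq_if_ind_eq_KH:
  assumes i: "i \<in> I" and x: "x \<in> lam0 i" and j: "j \<in> I" and y: "y \<in> lam0 j"
    and h: "ind_eq KH (i, x) (j, y)"
  shows "sigma_eq (i, x) (j, y)"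
proof -
  have "ind_eq K i j"
    unfolding ind_eq_def
  proof
    fix k assume "k \<in> K"
    then have "hatK k (i, x) = hatK k (j, y)" using h hatK_in_KH by (auto simp: ind_eq_def)
    then show "k i = k j" by (simp add: hatK_def)
  qed
  moreover have "ind_eq (F j) (lam i j x) y"
    unfolding ind_eq_def
  proof
    fix g assume g: "g \<in> F j"
    then show "g (lam i j x) = g y"
      using h hatH_in_KH[OF prod_F_of_component[OF j g]] hatH_of_component_apply[OF j g i x y]
      by (auto simp: ind_eq_def)
  qed
  ultimately show ?thesis
    using eqI_if_ind_eq[OF i j] fibre_eq_if_ind_eq[OF j lam_in[OF i j x] y] by (simp add: sig_eq_def)
qed

lemma sig_eq_sym:
  assumes i: "i \<in> I" and x: "x \<in> lam0 i" and j: "j \<in> I" and y: "y \<in> lam0 j"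
    and e: "sigma_eq (i, x) (j, y)"
  shows "sigma_eq (j, y) (i, x)"
proof -
  have ij: "eqI i j" and e: "eq j (lam i j x) y" using e by (auto simp: sig_eq_def)
  have "eq i (lam j i y) (lam j i (lam i j x))"
    using lam_respects_eq[OF j i y lam_in[OF i j x] fibre_eq_sym[OF j lam_in[OF i j x] y e]] .
  then have "eq i (lam j i y) x"
    by (rule fibre_eq_trans[OF i lam_in[OF j i y] lam_in[OF j i lam_in[OF i j x]] x _
        lam_inverse[OF i j ij x]])
  then show ?thesis using eqI_sym[OF i j ij] by (simp add: sig_eq_def)
qed

lemma sig_eq_trans:
  assumes i: "i \<in> I" and x: "x \<in> lam0 i" and j: "j \<in> I" and y: "y \<in> lam0 j"
    and k: "k \<in> I" and z: "z \<in> lam0 k"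
    and e1: "sigma_eq (i, x) (j, y)" and e2: "sigma_eq (j, y) (k, z)"
  shows "sigma_eq (i, x) (k, z)"
proof -
  have ij: "eqI i j" and jk: "eqI j k" and exy: "eq j (lam i j x) y" and eyz: "eq k (lam j k y) z"
    using e1 e2 by (auto simp: sig_eq_def)
  have "eq k (lam i k x) (lam j k (lam i j x))"
    using fibre_eq_sym[OF k lam_in[OF j k lam_in[OF i j x]] lam_in[OF i k x] lam_comp[OF i j k ij x]] .
  moreover have "eq k (lam j k (lam i j x)) (lam j k y)"
    using lam_respects_eq[OF j k lam_in[OF i j x] y exy] .
  ultimately have "eq k (lam i k x) (lam j k y)"
    by (rule fibre_eq_trans[OF k lam_in[OF i k x] lam_in[OF j k lam_in[OF i j x]] lam_in[OF j k y]])
  then have "eq k (lam i k x) z"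
    by (rule fibre_eq_trans[OF k lam_in[OF i k x] lam_in[OF j k y] z _ eyz])
  then show ?thesis using eqI_trans[OF i j k ij jk] by (simp add: sig_eq_def)
qed

lemma sig_eq_not_sig_neq:
  assumes i: "i \<in> I" and x: "x \<in> lam0 i" and j: "j \<in> I" and y: "y \<in> lam0 j"
    and "sigma_eq (i, x) (j, y)" and "sigma_neq (i, x) (j, y)"
  shows False
  using assms eqI_not_neqI[OF i j] neqI_iff_ind_neq[OF i j] fibre_eq_not_neq[OF j lam_in[OF i j x] y]
  by (auto simp: sig_eq_def sig_neq_def)

lemma Sigma_set_with_ineq: "set_with_ineq (Sigma I lam0) sigma_eq sigma_neq"
  unfolding set_with_ineq_def
proof (intro conjI ballI impI)
  fix p assume "p \<in> Sigma I lam0"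
  then show "sigma_eq p p" using eqI_refl lam_id by (auto simp: sig_eq_def)
next
  fix p q assume "p \<in> Sigma I lam0" "q \<in> Sigma I lam0" "sigma_eq p q"
  then show "sigma_eq q p" using sig_eq_sym by blast
next
  fix p q r assume "p \<in> Sigma I lam0" "q \<in> Sigma I lam0" "r \<in> Sigma I lam0"
    and "sigma_eq p q \<and> sigma_eq q r"
  then show "sigma_eq p r" using sig_eq_trans by blast
next
  fix p q assume "p \<in> Sigma I lam0" "q \<in> Sigma I lam0" "sigma_eq p q \<and> sigma_neq p q"
  then show False using sig_eq_not_sig_neq by blast
qed

lemma KH_extensional: "extensional_subset (Sigma I lam0) sigma_eq KH"
  unfolding extensional_subset_def
proof (intro conjI ballI impI)
  show "KH \<subseteq> fun_space (Sigma I lam0) sigma_eq"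
    unfolding KH_set_def by blast
next
  fix f g assume f: "f \<in> KH" and g: "g \<in> fun_space (Sigma I lam0) sigma_eq"
    and fg: "feq (Sigma I lam0) f g"
  have "feq (Sigma I lam0) f h \<Longrightarrow> feq (Sigma I lam0) g h" for h
    using fg by (simp add: feq_def)
  then show "g \<in> KH" using f g unfolding KH_set_def by blast
qed

end

theorem theorem4p8:
  fixes I :: "'i set" and eqI neqI :: "'i \<Rightarrow> 'i \<Rightarrow> bool" and K :: "('i \<Rightarrow> real) set"
    and lam0 :: "'i \<Rightarrow> 'x set" and eq neq :: "'i \<Rightarrow> 'x \<Rightarrow> 'x \<Rightarrow> bool"
    and lam :: "'i \<Rightarrow> 'i \<Rightarrow> 'x \<Rightarrow> 'x"
    and F :: "'i \<Rightarrow> ('x \<Rightarrow> real) set" and phi :: "'i \<Rightarrow> 'i \<Rightarrow> ('x \<Rightarrow> real) \<Rightarrow> ('x \<Rightarrow> real)"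
  assumes "completely_separated I eqI neqI K"
    and "global_family_cs I eqI lam0 eq neq lam F phi"
  shows "(\<forall>p\<in>Sigma I lam0. \<forall>q\<in>Sigma I lam0.
            ind_neq (KH_set I eqI K lam0 eq lam F phi) p q \<longleftrightarrow> sig_neq K neq lam p q)
         \<and> completely_separated (Sigma I lam0) (sig_eq eqI eq lam) (sig_neq K neq lam)
             (KH_set I eqI K lam0 eq lam F phi)"
proof -
  interpret global_family_over_cs_set I eqI neqI K lam0 eq neq lam F phi
    using assms by unfold_locales
  have "\<forall>p\<in>Sigma I lam0. \<forall>q\<in>Sigma I lam0. ind_neq KH p q \<longleftrightarrow> sigma_neq p q"
    using sig_neq_if_ind_neq_KH ind_neq_KH_if_sig_neq by blast
  moreover have "\<forall>p\<in>Sigma I lam0. \<forall>q\<in>Sigma I lam0. ind_eq KH p q \<longrightarrow> sigma_eq p q"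
    using sig_eq_if_ind_eq_KH by blast
  ultimately show ?thesis
    unfolding completely_separated_def using Sigma_set_with_ineq KH_extensional by blast
qed

end
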